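(* The graphs $\mathbf{X}_6$ and $\mathbf{X}_7$ are not block decomposable. In particular, they are not of geometric type (they do not arise from triangulations of bordered oriented surfaces with marked points).
   Context: A graph here is a finite directed multigraph with no loops and no oriented $2$-cycles. $\mathbf{X}_6$: vertices $x,w,y_1,z_1,y_2,z_2$; for $i=1,2$: two arrows $y_i\to z_i$, one arrow $z_i\to x$, one arrow $x\to y_i$; plus one arrow $w\to x$. $\mathbf{X}_7$: vertices $x,y_i,z_i$ ($i=1,2,3$); for each $i$: two arrows $y_i\to z_i$, one arrow $z_i\to x$, one arrow $x\to y_i$. Blocks: each block is a small graph whose vertices are marked either open or closed; all arrows single. I: open $a\to$ open $b$. II: open vertices $a,b,c$ with $a\to b\to c\to a$. IIIa: open $o$ and closed $s_1,s_2$ with $s_1\to o$, $s_2\to o$. IIIb: open $o$ and closed $s_1,s_2$ with $o\to s_1$, $o\to s_2$. IV: open $l,r$, closed $t,s$, arrows $l\to t$, $t\to r$, $l\to s$, $s\to r$, $r\to l$. V: open $c$, closed $A,B,C,D$, arrows $A\to c$, $c\to B$, $B\to A$, $c\to C$, $C\to D$, $D\to c$, $B\to D$, $C\to A$. A graph is block decomposable if it can be obtained as follows: take a disjoint union of finitely many blocks (each type may occur any number of times), choose a partial matching of the open vertices in which no vertex is matched to a vertex of the same block, identify matched vertices, and then, whenever two vertices $u,v$ have an arrow $u\to v$ and an arrow $v\to u$, delete both arrows (repeating until no such pairs remain). A graph is called of geometric type if it comes from a triangulation of a bordered oriented surface with marked points in the sense of Fomin–Shapiro–Thurston; by their work this is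 equivalent to being block decomposable. *)

theory Defs
  imports Main
begin

text \<open>A graph (finite directed multigraph) on a vertex type 'v is given by its
arrow-multiplicity function: m u v = number of arrows u -> v. The whole type
'v is the vertex set.\<close>

datatype btype = BI | BII | BIIIa | BIIIb | BIV | BV

fun block_verts :: "btype \<Rightarrow> nat set" where
  "block_verts BI = {0,1}"
| "block_verts BII = {0,1,2}"
| "block_verts BIIIa = {0,1,2}"
| "block_verts BIIIb = {0,1,2}"
| "block_verts BIV = {0,1,2,3}"
| "block_verts BV = {0,1,2,3,4}"

text \<open>Open vertices:
 I: a=0,b=1 open.  II: a=0,b=1,c=2 open.
 IIIa/IIIb: o=0 open, s1=1, s2=2 closed.
 IV: l=0, r=1 open, t=2, s=3 closed.
 V: c=0 open, A=1,B=2,C=3,D=4 closed.\<close>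

fun block_open :: "btype \<Rightarrow> nat \<Rightarrow> bool" where
  "block_open BI k = (k \<in> {0,1})"
| "block_open BII k = (k \<in> {0,1,2})"
| "block_open BIIIa k = (k = 0)"
| "block_open BIIIb k = (k = 0)"
| "block_open BIV k = (k \<in> {0,1})"
| "block_open BV k = (k = 0)"

fun block_edge :: "btype \<Rightarrow> nat \<Rightarrow> nat \<Rightarrow> bool" where
  "block_edge BI a b = ((a,b) = (0,1))"
| "block_edge BII a b = ((a,b) \<in> {(0,1),(1,2),(2,0)})"
| "block_edge BIIIa a b = ((a,b) \<in> {(1,0),(2,0)})"
| "block_edge BIIIb a b = ((a,b) \<in> {(0,1),(0,2)})"
| "block_edge BIV a b = ((a,b) \<in> {(0,2),(2,1),(0,3),(3,1),(1,0)})"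
| "block_edge BV a b = ((a,b) \<in> {(1,0),(0,2),(2,1),(0,3),(3,4),(4,0),(2,4),(3,1)})"

definition union_verts :: "btype list \<Rightarrow> (nat \<times> nat) set" where
  "union_verts bs = {(i,k). i < length bs \<and> k \<in> block_verts (bs ! i)}"

text \<open>Number of arrows u -> v in the glued graph before cancelling 2-cycles,
where \<pi> identifies vertices of the disjoint union with vertices of the result.\<close>

definition glued_arrows :: "btype list \<Rightarrow> (nat \<times> nat \<Rightarrow> 'v) \<Rightarrow> 'v \<Rightarrow> 'v \<Rightarrow> nat" where
  "glued_arrows bs \<pi> u v =
     card {(i,a,b). i < length bs \<and> block_edge (bs ! i) a b \<and> \<pi> (i,a) = u \<and> \<pi> (i,b) = v}"

text \<open>\<pi> describes the identification along a partial matching of open vertices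
(no vertex matched to a vertex of the same block): \<pi> is onto the vertex type,
each fibre has at most two elements, and two distinct identified vertices are
both open and lie in different blocks. The fibres of \<pi> are the vertices of the
glued graph, so \<pi> also encodes the isomorphism with the target graph.\<close>

definition matching_identification :: "btype list \<Rightarrow> (nat \<times> nat \<Rightarrow> 'v) \<Rightarrow> bool" where
  "matching_identification bs \<pi> \<longleftrightarrow>
     \<pi> ` union_verts bs = UNIV \<and>
     (\<forall>v. card {p \<in> union_verts bs. \<pi> p = v} \<le> 2) \<and>
     (\<forall>p \<in> union_verts bs. \<forall>q \<in> union_verts bs. p \<noteq> q \<and> \<pi> p = \<pi> q \<longrightarrow>
         block_open (bs ! fst p) (snd p) \<and> block_open (bs ! fst q) (snd q) \<and> fst p \<noteq> fst q)"

text \<open>Repeatedly deleting pairs of opposite arrows u->v, v->u leaves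
max 0 (n(u,v) - n(v,u)) arrows u->v (truncated nat subtraction).\<close>

definition block_decomposable :: "('v \<Rightarrow> 'v \<Rightarrow> nat) \<Rightarrow> bool" where
  "block_decomposable m \<longleftrightarrow>
     (\<exists>bs \<pi>. matching_identification bs \<pi> \<and>
        (\<forall>u. m u u = 0) \<and>
        (\<forall>u v. u \<noteq> v \<longrightarrow> m u v = glued_arrows bs \<pi> u v - glued_arrows bs \<pi> v u))"

datatype x6v = X6x | X6w | X6y1 | X6z1 | X6y2 | X6z2

fun X6 :: "x6v \<Rightarrow> x6v \<Rightarrow> nat" where
  "X6 X6y1 X6z1 = 2"
| "X6 X6z1 X6x = 1"
| "X6 X6x X6y1 = 1"
| "X6 X6y2 X6z2 = 2"
| "X6 X6z2 X6x = 1"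
| "X6 X6x X6y2 = 1"
| "X6 X6w X6x = 1"
| "X6 _ _ = 0"

datatype x7v = X7x | X7y1 | X7z1 | X7y2 | X7z2 | X7y3 | X7z3

fun X7 :: "x7v \<Rightarrow> x7v \<Rightarrow> nat" where
  "X7 X7y1 X7z1 = 2"
| "X7 X7z1 X7x = 1"
| "X7 X7x X7y1 = 1"
| "X7 X7y2 X7z2 = 2"
| "X7 X7z2 X7x = 1"
| "X7 X7x X7y2 = 1"
| "X7 X7y3 X7z3 = 2"
| "X7 X7z3 X7x = 1"
| "X7 X7x X7y3 = 1"
| "X7 _ _ = 0"

end

theory Submission
  imports Defs
begin

text \<open>A double arrow \<open>y \<Rightarrow> z\<close> cannot come from a single block, so it is the image of arrows
of two different blocks; then the fibres over \<open>y\<close> and \<open>z\<close> are full and consist of open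
vertices, and every arrow \<open>x \<rightarrow> y\<close> must come from one of these two blocks. Hence each
spike \<open>x \<rightarrow> y\<^sub>i \<Rightarrow> z\<^sub>i\<close> of \<open>X\<^sub>6\<close> or \<open>X\<^sub>7\<close> lives in a block containing \<open>x\<close> and the open
vertices \<open>y\<^sub>i, z\<^sub>i\<close>. A block has at most three open vertices, so different spikes lie in
different blocks. For \<open>X\<^sub>7\<close> this puts \<open>x\<close> into three blocks, too many for one fibre. For
\<open>X\<^sub>6\<close> the preimages of \<open>x\<close> become open as well, so both blocks are triangles of type II
with all vertices mapped to \<open>x, y\<^sub>i, z\<^sub>i\<close>, and no block is left to carry \<open>w \<rightarrow> x\<close>.\<close>

lemma block_verts_le_4: "k \<in> block_verts t \<Longrightarrow> k \<le> 4"
  by (cases t) auto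

lemma block_edge_verts: "block_edge t a b \<Longrightarrow> a \<in> block_verts t \<and> b \<in> block_verts t"
  by (cases t) auto

lemma block_open_le_2: "block_open t k \<Longrightarrow> k \<le> 2"
  by (cases t) auto

lemma three_open_imp_BII:
  "\<lbrakk>block_open t a; block_open t b; block_open t c; a \<noteq> b; a \<noteq> c; b \<noteq> c\<rbrakk> \<Longrightarrow> t = BII"
  by (cases t) auto

lemma union_verts_iff: "(i, k) \<in> union_verts bs \<longleftrightarrow> i < length bs \<and> k \<in> block_verts (bs ! i)"
  by (simp add: union_verts_def)

lemma finite_union_verts: "finite (union_verts bs)"
  by (rule finite_subset[of _ "{..<length bs} \<times> {..4::nat}"])
    (auto simp: union_verts_def dest: block_verts_le_4)

lemma block_edge_union_verts:
  "\<lbrakk>i < length bs; block_edge (bs ! i) a b\<rbrakk> \<Longrightarrow> (i, a) \<in> union_verts bs \<and> (i, b) \<in> union_verts bs"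
  by (simp add: union_verts_iff block_edge_verts)

context
  fixes bs :: "btype list" and \<pi> :: "nat \<times> nat \<Rightarrow> 'v"
  assumes mi: "matching_identification bs \<pi>"
begin

lemma identified_open_distinct_blocks:
  assumes "p \<in> union_verts bs" "q \<in> union_verts bs" "p \<noteq> q" "\<pi> p = \<pi> q"
  shows "block_open (bs ! fst p) (snd p) \<and> fst p \<noteq> fst q"
  using mi assms unfolding matching_identification_def by blast

lemma inj_on_block:
  "\<lbrakk>(i, a) \<in> union_verts bs; (i, b) \<in> union_verts bs; \<pi> (i, a) = \<pi> (i, b)\<rbrakk> \<Longrightarrow> a = b"
  using identified_open_distinct_blocks[of "(i, a)" "(i, b)"] by auto

lemma identified_across_blocks_open:
  "\<lbrakk>(i, a) \<in> union_verts bs; (j, b) \<in> union_verts bs; \<pi> (i, a) = \<pi> (j, b); i \<noteq> j\<rbrakk>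
    \<Longrightarrow> block_open (bs ! i) a"
  using identified_open_distinct_blocks[of "(i, a)" "(j, b)"] by auto

lemma fibre_meets_two_blocks:
  assumes "(i, a) \<in> union_verts bs" "(j, b) \<in> union_verts bs" "(l, c) \<in> union_verts bs"
    and "\<pi> (i, a) = \<pi> (l, c)" "\<pi> (j, b) = \<pi> (l, c)" "i \<noteq> j"
  shows "l = i \<or> l = j"
proof (rule ccontr)
  let ?F = "{p \<in> union_verts bs. \<pi> p = \<pi> (l, c)}"
  assume "\<not> ?thesis"
  with \<open>i \<noteq> j\<close> have "card {(i, a), (j, b), (l, c)} = 3" by auto
  moreover have "card {(i, a), (j, b), (l, c)} \<le> card ?F"
    by (rule card_mono) (use assms finite_union_verts in auto)
  ultimately have "3 \<le> card ?F" by simp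
  moreover have "card ?F \<le> 2" using mi unfolding matching_identification_def by blast
  ultimately show False by linarith
qed

lemma glued_arrows_ge_2_imp_two_blocks:
  assumes "glued_arrows bs \<pi> u v \<ge> 2"
  obtains i j a b c d where "i \<noteq> j" "i < length bs" "j < length bs"
    "block_edge (bs ! i) a b" "block_edge (bs ! j) c d"
    "\<pi> (i, a) = u" "\<pi> (i, b) = v" "\<pi> (j, c) = u" "\<pi> (j, d) = v"
proof -
  let ?S = "{(i, a, b). i < length bs \<and> block_edge (bs ! i) a b \<and> \<pi> (i, a) = u \<and> \<pi> (i, b) = v}"
  from assms have "2 \<le> card ?S" by (simp add: glued_arrows_def)
  then have "finite ?S" "\<not> card ?S \<le> Suc 0" using card.infinite by fastforce+
  then obtain s t where st: "s \<in> ?S" "t \<in> ?S" "s \<noteq> t"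
    unfolding card_le_Suc0_iff_eq[OF \<open>finite ?S\<close>] by blast
  obtain i a b j c d where s: "s = (i, a, b)" and t: "t = (j, c, d)" by (cases s, cases t) auto
  have "i \<noteq> j"
  proof
    assume "i = j"
    with st s t have U: "(i, a) \<in> union_verts bs" "(i, b) \<in> union_verts bs"
      "(i, c) \<in> union_verts bs" "(i, d) \<in> union_verts bs"
      using block_edge_union_verts by auto
    with st s t \<open>i = j\<close> have "a = c" "b = d" using inj_on_block by auto
    with \<open>i = j\<close> st s t show False by simp
  qed
  with st s t that show thesis by auto
qed

end

lemma glued_arrows_pos_imp_edge:
  assumes "glued_arrows bs \<pi> u v \<noteq> 0"
  obtains k a b where "k < length bs" "block_edge (bs ! k) a b" "\<pi> (k, a) = u" "\<pi> (k, b) = v"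
proof -
  from assms have "{(i, a, b). i < length bs \<and> block_edge (bs ! i) a b \<and> \<pi> (i, a) = u \<and> \<pi> (i, b) = v} \<noteq> {}"
    unfolding glued_arrows_def by (metis card.empty)
  with that show thesis by blast
qed

definition decomposition :: "btype list \<Rightarrow> (nat \<times> nat \<Rightarrow> 'v) \<Rightarrow> ('v \<Rightarrow> 'v \<Rightarrow> nat) \<Rightarrow> bool" where
  "decomposition bs \<pi> m \<longleftrightarrow> matching_identification bs \<pi> \<and>
     (\<forall>u v. u \<noteq> v \<longrightarrow> m u v = glued_arrows bs \<pi> u v - glued_arrows bs \<pi> v u)"

lemma block_decomposableE:
  assumes "block_decomposable m"
  obtains bs \<pi> where "decomposition bs \<pi> m"
  using assms unfolding block_decomposable_def decomposition_def by blast

lemma decomposition_arrow_edge: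
  assumes "decomposition bs \<pi> m" "m u v \<noteq> 0" "u \<noteq> v"
  obtains k a b where "(k, a) \<in> union_verts bs" "(k, b) \<in> union_verts bs"
    "\<pi> (k, a) = u" "\<pi> (k, b) = v"
proof -
  from assms have "glued_arrows bs \<pi> u v \<noteq> 0" unfolding decomposition_def by fastforce
  then show thesis
    by (rule glued_arrows_pos_imp_edge) (use that block_edge_union_verts in blast)
qed

lemma decomposition_double_arrow_block:
  assumes dec: "decomposition bs \<pi> m" and yz: "m y z = 2" "y \<noteq> z" and xy: "m x y \<noteq> 0" "x \<noteq> y"
  obtains k e p q where "(k, e) \<in> union_verts bs" "(k, p) \<in> union_verts bs" "(k, q) \<in> union_verts bs"
    "\<pi> (k, e) = x" "\<pi> (k, p) = y" "\<pi> (k, q) = z" "block_open (bs ! k) p" "block_open (bs ! k) q"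
proof -
  have mi: "matching_identification bs \<pi>" using dec by (simp add: decomposition_def)
  from dec yz have "glued_arrows bs \<pi> y z \<ge> 2" unfolding decomposition_def by (metis diff_le_self)
  then obtain i j a b c d where ij: "i \<noteq> j" and
    edges: "i < length bs" "j < length bs" "block_edge (bs ! i) a b" "block_edge (bs ! j) c d"
    and \<pi>: "\<pi> (i, a) = y" "\<pi> (i, b) = z" "\<pi> (j, c) = y" "\<pi> (j, d) = z"
    using glued_arrows_ge_2_imp_two_blocks[OF mi] by blast
  have U: "(i, a) \<in> union_verts bs" "(i, b) \<in> union_verts bs"
    "(j, c) \<in> union_verts bs" "(j, d) \<in> union_verts bs"
    using edges block_edge_union_verts by blast+
  obtain k e f where xU: "(k, e) \<in> union_verts bs" "(k, f) \<in> union_verts bs"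
    and x\<pi>: "\<pi> (k, e) = x" "\<pi> (k, f) = y"
    using decomposition_arrow_edge[OF dec xy] .
  have "k = i \<or> k = j" using fibre_meets_two_blocks[OF mi U(1,3) xU(2)] \<pi> x\<pi> ij by simp
  then show thesis
  proof
    assume "k = i"
    moreover have "block_open (bs ! i) a" "block_open (bs ! i) b"
      using identified_across_blocks_open[OF mi] U \<pi> ij by metis+
    ultimately show thesis using that U xU \<pi> x\<pi> by blast
  next
    assume "k = j"
    moreover have "block_open (bs ! j) c" "block_open (bs ! j) d"
      using identified_across_blocks_open[OF mi] U \<pi> ij by metis+
    ultimately show thesis using that U xU \<pi> x\<pi> by blast
  qed
qed

text \<open>Four distinct images would need four open vertices in one block, but blocks have at most three.\<close>

lemma open_pairs_distinct_blocks:
  assumes "block_open (bs ! k) p" "block_open (bs ! k) q" "block_open (bs ! k') p'" "block_open (bs ! k') q'"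
    and "\<pi> (k, p) = y" "\<pi> (k, q) = z" "\<pi> (k', p') = y'" "\<pi> (k', q') = z'"
    and "distinct [y, z, y', z']"
  shows "k \<noteq> k'"
proof
  assume "k = k'"
  with assms have "distinct [p, q, p', q']" by auto
  moreover have "p \<le> 2" "q \<le> 2" "p' \<le> 2" "q' \<le> 2"
    using assms(1-4) \<open>k = k'\<close> block_open_le_2 by auto
  ultimately show False by auto
qed

lemma X6_not_block_decomposable: "\<not> block_decomposable X6"
proof
  assume "block_decomposable X6"
  then obtain bs and \<pi> :: "nat \<times> nat \<Rightarrow> x6v" where dec: "decomposition bs \<pi> X6"
    by (rule block_decomposableE)
  then have mi: "matching_identification bs \<pi>" by (simp add: decomposition_def)
  obtain k1 e1 p1 q1 where B1: "(k1, e1) \<in> union_verts bs" "(k1, p1) \<in> union_verts bs" "(k1, q1) \<in> union_verts bs"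
    "\<pi> (k1, e1) = X6x" "\<pi> (k1, p1) = X6y1" "\<pi> (k1, q1) = X6z1" "block_open (bs ! k1) p1" "block_open (bs ! k1) q1"
    by (rule decomposition_double_arrow_block[OF dec, of X6y1 X6z1 X6x]) simp_all
  obtain k2 e2 p2 q2 where B2: "(k2, e2) \<in> union_verts bs" "(k2, p2) \<in> union_verts bs" "(k2, q2) \<in> union_verts bs"
    "\<pi> (k2, e2) = X6x" "\<pi> (k2, p2) = X6y2" "\<pi> (k2, q2) = X6z2" "block_open (bs ! k2) p2" "block_open (bs ! k2) q2"
    by (rule decomposition_double_arrow_block[OF dec, of X6y2 X6z2 X6x]) simp_all
  have k12: "k1 \<noteq> k2" by (rule open_pairs_distinct_blocks[OF B1(7,8) B2(7,8) B1(5,6) B2(5,6)]) simp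
  have "block_open (bs ! k1) e1" "block_open (bs ! k2) e2"
    using identified_across_blocks_open[OF mi] B1(1,4) B2(1,4) k12 by metis+
  then have "bs ! k1 = BII" "bs ! k2 = BII"
    using three_open_imp_BII B1(4-8) B2(4-8) by (metis x6v.distinct)+
  obtain g r s where W: "(g, r) \<in> union_verts bs" "(g, s) \<in> union_verts bs" "\<pi> (g, r) = X6w" "\<pi> (g, s) = X6x"
    by (rule decomposition_arrow_edge[OF dec, of X6w X6x]) simp_all
  have "g = k1 \<or> g = k2" using fibre_meets_two_blocks[OF mi B1(1) B2(1) W(2)] B1 B2 W k12 by simp
  then show False
  proof
    assume "g = k1"
    with W B1 \<open>bs ! k1 = BII\<close> have "r \<in> {e1, p1, q1}" by (auto simp: union_verts_iff)
    with W B1 \<open>g = k1\<close> show False by auto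
  next
    assume "g = k2"
    with W B2 \<open>bs ! k2 = BII\<close> have "r \<in> {e2, p2, q2}" by (auto simp: union_verts_iff)
    with W B2 \<open>g = k2\<close> show False by auto
  qed
qed

lemma X7_not_block_decomposable: "\<not> block_decomposable X7"
proof
  assume "block_decomposable X7"
  then obtain bs and \<pi> :: "nat \<times> nat \<Rightarrow> x7v" where dec: "decomposition bs \<pi> X7"
    by (rule block_decomposableE)
  then have mi: "matching_identification bs \<pi>" by (simp add: decomposition_def)
  obtain k1 e1 p1 q1 where B1: "(k1, e1) \<in> union_verts bs" "\<pi> (k1, e1) = X7x"
    "\<pi> (k1, p1) = X7y1" "\<pi> (k1, q1) = X7z1" "block_open (bs ! k1) p1" "block_open (bs ! k1) q1"
    by (rule decomposition_double_arrow_block[OF dec, of X7y1 X7z1 X7x]) simp_all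
  obtain k2 e2 p2 q2 where B2: "(k2, e2) \<in> union_verts bs" "\<pi> (k2, e2) = X7x"
    "\<pi> (k2, p2) = X7y2" "\<pi> (k2, q2) = X7z2" "block_open (bs ! k2) p2" "block_open (bs ! k2) q2"
    by (rule decomposition_double_arrow_block[OF dec, of X7y2 X7z2 X7x]) simp_all
  obtain k3 e3 p3 q3 where B3: "(k3, e3) \<in> union_verts bs" "\<pi> (k3, e3) = X7x"
    "\<pi> (k3, p3) = X7y3" "\<pi> (k3, q3) = X7z3" "block_open (bs ! k3) p3" "block_open (bs ! k3) q3"
    by (rule decomposition_double_arrow_block[OF dec, of X7y3 X7z3 X7x]) simp_all
  have "k1 \<noteq> k2" by (rule open_pairs_distinct_blocks[OF B1(5,6) B2(5,6) B1(3,4) B2(3,4)]) simp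
  moreover have "k3 \<noteq> k1" by (rule open_pairs_distinct_blocks[OF B3(5,6) B1(5,6) B3(3,4) B1(3,4)]) simp
  moreover have "k3 \<noteq> k2" by (rule open_pairs_distinct_blocks[OF B3(5,6) B2(5,6) B3(3,4) B2(3,4)]) simp
  ultimately show False using fibre_meets_two_blocks[OF mi B1(1) B2(1) B3(1)] B1 B2 B3 by simp
qed

theorem mainTheorem3:
  shows "\<not> block_decomposable X6 \<and> \<not> block_decomposable X7"
  using X6_not_block_decomposable X7_not_block_decomposable by blast

end
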